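(* Let $X,Y$ be compact metric spaces and let $\mathcal G\subset\mathrm{Homeo}(X)$, $\mathcal H\subset\mathrm{Homeo}(Y)$ be finitely generated pseudogroups strongly isomorphic via a homeomorphism $\varphi:X\to Y$; let $\mathcal G_1$ be a finite generating set of $\mathcal G$ and $\mathcal H_1=\{\varphi\circ g\circ\varphi^{-1}:g\in\mathcal G_1\}$. If a Borel probability measure $\mu$ on $X$ is $(\mathcal G,\mathcal G_1)$-expansive with some constant $\eta>0$, then there exists $\delta>0$ such that $\varphi_*\mu$ is $(\mathcal H,\mathcal H_1)$-expansive with constant $\delta$.
   Context: $\mathrm{Homeo}(X)$: homeomorphisms $g:D_g\to R_g$ between open subsets of $X$, composed on natural domains $D_{h\circ g}=g^{-1}(D_h)$. A pseudogroup is a subset of $\mathrm{Homeo}(X)$ containing $\mathrm{id}_X$, closed under composition, inversion, restriction to open subsets, and gluing along open covers of the domain; $\Gamma$ generates $\mathcal G$ if $\bigcup_{g\in\Gamma}(D_g\cup R_g)=X$ and $\mathcal G$ is exactly the set of $g\in\mathrm{Homeo}(X)$ locally equal near each point of $D_g$ to a finite composition of elements of $\Gamma$ and their inverses. $\mathcal G,\mathcal H$ are strongly isomorphic via $\varphi$ if for every $f\in\mathrm{Homeo}(X)$: $\varphi\circ f\circ\varphi^{-1}\in\mathcal H$ iff $f\in\mathcal G$. For a pseudogroup with finite generating set $\Gamma$: $\Gamma_n=\{g_1\circ\cdots\circ g_n:g_i\in\Gamma\}$, $\Gamma_n^x=\{g\in\Gamma_n:x\in D_g\}$, $\Phi_\delta(x)=\{y: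 d(g(x),g(y))\le\delta\ \forall n\in\mathbb N,\ \forall g\in\Gamma_n^x\cap\Gamma_n^y\}$. A Borel probability measure $\mu$ is expansive with constant $\delta$ for $(\mathcal G,\Gamma)$ if $\mu(\Phi_\delta(x))=0$ for every point $x$. $\varphi_*\mu=\mu\circ\varphi^{-1}$. *)

theory Defs
  imports "HOL-Probability.Probability"
begin

text \<open>Elements of Homeo(X) are represented as partial maps 'a \<rightharpoonup> 'a:
  the domain D_g is dom g, the range R_g is ran g.\<close>

type_synonym 'a pmap = "'a \<Rightarrow> 'a option"

definition pfun :: "'a pmap \<Rightarrow> 'a \<Rightarrow> 'a" where
  "pfun g x = the (g x)"

definition is_phomeo :: "('a::topological_space) pmap \<Rightarrow> bool" where
  "is_phomeo g \<longleftrightarrow> open (dom g) \<and> open (ran g) \<and>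
     (\<exists>h. homeomorphism (dom g) (ran g) (pfun g) h)"

definition Homeo :: "('a::topological_space) pmap set" where
  "Homeo = {g. is_phomeo g}"

text \<open>Composition on natural domains: D_{h o g} = g^{-1}(D_h); this is map_comp.\<close>

definition pinv :: "'a pmap \<Rightarrow> 'a pmap" where
  "pinv g = (\<lambda>y. if y \<in> ran g then Some (inv_into (dom g) (pfun g) y) else None)"

definition pid :: "'a pmap" where
  "pid = (\<lambda>x. Some x)"

fun comp_list :: "'a pmap list \<Rightarrow> 'a pmap" where
  "comp_list [] = pid"
| "comp_list (g # gs) = g \<circ>\<^sub>m comp_list gs"

definition is_pseudogroup :: "('a::topological_space) pmap set \<Rightarrow> bool" where
  "is_pseudogroup G \<longleftrightarrow> G \<subseteq> Homeo \<and> pid \<in> G \<and>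
     (\<forall>g\<in>G. \<forall>h\<in>G. h \<circ>\<^sub>m g \<in> G) \<and>
     (\<forall>g\<in>G. pinv g \<in> G) \<and>
     (\<forall>g\<in>G. \<forall>U. open U \<longrightarrow> g |` U \<in> G) \<and>
     (\<forall>g\<in>Homeo. (\<forall>x\<in>dom g. \<exists>U. open U \<and> x \<in> U \<and> g |` U \<in> G) \<longrightarrow> g \<in> G)"

definition generated_pg :: "('a::topological_space) pmap set \<Rightarrow> 'a pmap set" where
  "generated_pg \<Gamma> = {g \<in> Homeo. \<forall>x\<in>dom g. \<exists>U ws. open U \<and> x \<in> U \<and> U \<subseteq> dom g \<and>
       set ws \<subseteq> \<Gamma> \<union> pinv ` \<Gamma> \<and> U \<subseteq> dom (comp_list ws) \<and>
       (\<forall>y\<in>U. g y = comp_list ws y)}"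

definition generates :: "('a::topological_space) pmap set \<Rightarrow> 'a pmap set \<Rightarrow> bool" where
  "generates \<Gamma> G \<longleftrightarrow> \<Gamma> \<subseteq> Homeo \<and> (\<Union>g\<in>\<Gamma>. dom g \<union> ran g) = UNIV \<and> G = generated_pg \<Gamma>"

definition fin_gen_pseudogroup :: "('a::topological_space) pmap set \<Rightarrow> bool" where
  "fin_gen_pseudogroup G \<longleftrightarrow> is_pseudogroup G \<and> (\<exists>\<Gamma>. finite \<Gamma> \<and> generates \<Gamma> G)"

text \<open>Conjugation \<phi> o f o \<phi>^{-1}, where \<psi> is the inverse of the homeomorphism \<phi>.\<close>
definition conj_pmap :: "('a \<Rightarrow> 'b) \<Rightarrow> ('b \<Rightarrow> 'a) \<Rightarrow> 'a pmap \<Rightarrow> 'b pmap" where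
  "conj_pmap \<phi> \<psi> f = (\<lambda>y. map_option \<phi> (f (\<psi> y)))"

definition strongly_isomorphic ::
  "('a::topological_space) pmap set \<Rightarrow> ('b::topological_space) pmap set \<Rightarrow> ('a \<Rightarrow> 'b) \<Rightarrow> bool" where
  "strongly_isomorphic G H \<phi> \<longleftrightarrow> homeomorphism UNIV UNIV \<phi> (inv \<phi>) \<and>
     (\<forall>f\<in>Homeo. conj_pmap \<phi> (inv \<phi>) f \<in> H \<longleftrightarrow> f \<in> G)"

definition Gamma_n :: "'a pmap set \<Rightarrow> nat \<Rightarrow> 'a pmap set" where
  "Gamma_n \<Gamma> n = {comp_list gs | gs. length gs = n \<and> set gs \<subseteq> \<Gamma>}"

definition Phi :: "('a::metric_space) pmap set \<Rightarrow> real \<Rightarrow> 'a \<Rightarrow> 'a set" where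
  "Phi \<Gamma> \<delta> x = {y. \<forall>n\<ge>1. \<forall>g\<in>Gamma_n \<Gamma> n. x \<in> dom g \<and> y \<in> dom g \<longrightarrow>
                      dist (pfun g x) (pfun g y) \<le> \<delta>}"

definition expansive_measure :: "('a::metric_space) measure \<Rightarrow> 'a pmap set \<Rightarrow> real \<Rightarrow> bool" where
  "expansive_measure \<mu> \<Gamma> \<delta> \<longleftrightarrow> (\<forall>x. Phi \<Gamma> \<delta> x \<in> null_sets \<mu>)"

end

theory Submission
  imports Defs
begin

text \<open>Conjugation by \<phi> carries words in \<open>G1\<close> to words in \<open>H1\<close>. Hence if \<open>\<delta>\<close> is a
  modulus of uniform continuity of \<open>\<phi>\<^sup>-\<^sup>1\<close> for \<open>\<eta>\<close> (Y is compact), then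
  \<open>\<phi>\<^sup>-\<^sup>1(\<Phi>\<^sub>\<delta>(y)) \<subseteq> \<Phi>\<^sub>\<eta>(\<phi>\<^sup>-\<^sup>1(y))\<close>, a \<open>\<mu>\<close>-null set. As \<open>\<Phi>\<^sub>\<delta>(y)\<close> is closed, hence Borel,
  it is \<open>\<phi>\<^sub>*\<mu>\<close>-null.\<close>

definition continuous_pmap :: "('a::topological_space) pmap \<Rightarrow> bool" where
  "continuous_pmap g \<longleftrightarrow> open (dom g) \<and> continuous_on (dom g) (pfun g)"

lemma Homeo_imp_continuous_pmap: "g \<in> Homeo \<Longrightarrow> continuous_pmap g"
  by (auto simp: Homeo_def is_phomeo_def continuous_pmap_def homeomorphism_def)

lemma continuous_pmap_pid: "continuous_pmap pid"
  by (simp add: continuous_pmap_def pid_def pfun_def[abs_def])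

lemma continuous_pmap_map_comp:
  assumes "continuous_pmap f" and "continuous_pmap g"
  shows "continuous_pmap (f \<circ>\<^sub>m g)"
proof -
  from assms have open_f: "open (dom f)" and cont_f: "continuous_on (dom f) (pfun f)"
    and open_g: "open (dom g)" and cont_g: "continuous_on (dom g) (pfun g)"
    by (auto simp: continuous_pmap_def)
  have dom_comp: "dom (f \<circ>\<^sub>m g) = dom g \<inter> pfun g -` dom f"
    by (auto simp: map_comp_def pfun_def split: option.splits)
  have "open (dom g \<inter> pfun g -` dom f)"
    using continuous_open_preimage[OF cont_g open_g open_f] .
  moreover have "continuous_on (dom g \<inter> pfun g -` dom f) (pfun f \<circ> pfun g)"
    by (rule continuous_on_compose)
      (auto intro: continuous_on_subset[OF cont_g] continuous_on_subset[OF cont_f])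
  moreover have "\<forall>x\<in>dom (f \<circ>\<^sub>m g). pfun (f \<circ>\<^sub>m g) x = (pfun f \<circ> pfun g) x"
    by (auto simp: map_comp_def pfun_def split: option.splits)
  ultimately show ?thesis
    unfolding continuous_pmap_def dom_comp using continuous_on_cong by fastforce
qed

lemma continuous_pmap_comp_list:
  "(\<And>g. g \<in> set gs \<Longrightarrow> continuous_pmap g) \<Longrightarrow> continuous_pmap (comp_list gs)"
  by (induction gs) (simp_all add: continuous_pmap_pid continuous_pmap_map_comp)

lemma closed_Phi:
  fixes \<Gamma> :: "('a::metric_space) pmap set"
  assumes "\<And>g. g \<in> \<Gamma> \<Longrightarrow> continuous_pmap g"
  shows "closed (Phi \<Gamma> \<delta> x)"
proof -
  have "closed {y. x \<in> dom g \<and> y \<in> dom g \<longrightarrow> dist (pfun g x) (pfun g y) \<le> \<delta>}"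
    if "g \<in> Gamma_n \<Gamma> n" for g n
  proof -
    from that assms have "continuous_pmap g"
      by (auto simp: Gamma_n_def intro: continuous_pmap_comp_list)
    then have "open (dom g \<inter> pfun g -` (- cball (pfun g x) \<delta>))"
      by (auto simp: continuous_pmap_def intro: continuous_open_preimage)
    moreover have "{y. x \<in> dom g \<and> y \<in> dom g \<longrightarrow> dist (pfun g x) (pfun g y) \<le> \<delta>} =
        (if x \<in> dom g then - (dom g \<inter> pfun g -` (- cball (pfun g x) \<delta>)) else UNIV)"
      by auto
    ultimately show ?thesis by (simp add: closed_def)
  qed
  moreover have "Phi \<Gamma> \<delta> x = (\<Inter>n\<in>{1..}. \<Inter>g\<in>Gamma_n \<Gamma> n.
      {y. x \<in> dom g \<and> y \<in> dom g \<longrightarrow> dist (pfun g x) (pfun g y) \<le> \<delta>})"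
    by (auto simp: Phi_def)
  ultimately show ?thesis by (auto intro!: closed_INT)
qed

lemma generator_in_generated_pg:
  assumes "g \<in> \<Gamma>" "\<Gamma> \<subseteq> Homeo"
  shows "g \<in> generated_pg \<Gamma>"
proof -
  have "comp_list [g] = g" by (auto simp: pid_def map_comp_def split: option.splits)
  then show ?thesis
    using assms unfolding generated_pg_def
    by (auto simp: Homeo_def is_phomeo_def intro!: exI[of _ "dom g"] exI[of _ "[g]"])
qed

lemma conj_pmap_map_comp:
  assumes "\<And>x. \<psi> (\<phi> x) = x"
  shows "conj_pmap \<phi> \<psi> f \<circ>\<^sub>m conj_pmap \<phi> \<psi> g = conj_pmap \<phi> \<psi> (f \<circ>\<^sub>m g)"
  by (rule ext) (auto simp: conj_pmap_def map_comp_def assms split: option.splits)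

lemma conj_pmap_comp_list:
  assumes "\<And>x. \<psi> (\<phi> x) = x" "\<And>y. \<phi> (\<psi> y) = y"
  shows "comp_list (map (conj_pmap \<phi> \<psi>) gs) = conj_pmap \<phi> \<psi> (comp_list gs)"
proof (induction gs)
  case Nil
  show ?case by (auto simp: conj_pmap_def pid_def assms)
next
  case (Cons f gs)
  then show ?case by (simp add: conj_pmap_map_comp assms)
qed

lemma conj_pmap_Gamma_n:
  assumes "\<And>x. \<psi> (\<phi> x) = x" "\<And>y. \<phi> (\<psi> y) = y" "g \<in> Gamma_n \<Gamma> n"
  shows "conj_pmap \<phi> \<psi> g \<in> Gamma_n (conj_pmap \<phi> \<psi> ` \<Gamma>) n"
proof -
  from assms(3) obtain gs where "g = comp_list gs" "length gs = n" "set gs \<subseteq> \<Gamma>"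
    by (auto simp: Gamma_n_def)
  moreover from this have "conj_pmap \<phi> \<psi> g = comp_list (map (conj_pmap \<phi> \<psi>) gs)"
    using conj_pmap_comp_list[OF assms(1,2)] by simp
  ultimately show ?thesis
    unfolding Gamma_n_def by (intro CollectI exI[of _ "map (conj_pmap \<phi> \<psi>) gs"]) auto
qed

lemma vimage_Phi_conj_pmap_subset:
  fixes \<phi> :: "'a::metric_space \<Rightarrow> 'b::metric_space"
  assumes inv1: "\<And>x. \<psi> (\<phi> x) = x" and inv2: "\<And>y. \<phi> (\<psi> y) = y"
    and modulus: "\<And>a b. dist a b \<le> \<delta> \<Longrightarrow> dist (\<psi> a) (\<psi> b) \<le> \<eta>"
  shows "\<phi> -` Phi (conj_pmap \<phi> \<psi> ` \<Gamma>) \<delta> y \<subseteq> Phi \<Gamma> \<eta> (\<psi> y)"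
proof
  fix z assume z: "z \<in> \<phi> -` Phi (conj_pmap \<phi> \<psi> ` \<Gamma>) \<delta> y"
  show "z \<in> Phi \<Gamma> \<eta> (\<psi> y)"
    unfolding Phi_def
  proof (intro CollectI allI impI ballI)
    fix n g assume n: "1 \<le> n" and g: "g \<in> Gamma_n \<Gamma> n" and dom: "\<psi> y \<in> dom g \<and> z \<in> dom g"
    let ?h = "conj_pmap \<phi> \<psi> g"
    have "y \<in> dom ?h" "\<phi> z \<in> dom ?h"
      using dom by (auto simp: conj_pmap_def inv1)
    then have "dist (pfun ?h y) (pfun ?h (\<phi> z)) \<le> \<delta>"
      using z n conj_pmap_Gamma_n[OF inv1 inv2 g] unfolding Phi_def by blast
    moreover have "pfun ?h y = \<phi> (pfun g (\<psi> y))" "pfun ?h (\<phi> z) = \<phi> (pfun g z)"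
      using dom by (auto simp: conj_pmap_def pfun_def inv1)
    ultimately show "dist (pfun g (\<psi> y)) (pfun g z) \<le> \<eta>"
      using modulus inv1 by metis
  qed
qed

lemma expansive_measure_distr:
  fixes \<phi> :: "'a::metric_space \<Rightarrow> 'b::metric_space"
  assumes "expansive_measure \<mu> \<Gamma> \<eta>" and "\<phi> \<in> measurable \<mu> borel"
    and "\<And>y. Phi \<Gamma>' \<delta> y \<in> sets borel"
    and "\<And>y. \<phi> -` Phi \<Gamma>' \<delta> y \<subseteq> Phi \<Gamma> \<eta> (\<psi> y)"
  shows "expansive_measure (distr \<mu> borel \<phi>) \<Gamma>' \<delta>"
  unfolding expansive_measure_def
proof
  fix y
  have "\<phi> -` Phi \<Gamma>' \<delta> y \<inter> space \<mu> \<in> null_sets \<mu>"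
  proof (rule null_sets_subset)
    show "Phi \<Gamma> \<eta> (\<psi> y) \<in> null_sets \<mu>"
      using assms(1) by (simp add: expansive_measure_def)
    show "\<phi> -` Phi \<Gamma>' \<delta> y \<inter> space \<mu> \<in> sets \<mu>"
      using measurable_sets[OF assms(2,3)] .
    show "\<phi> -` Phi \<Gamma>' \<delta> y \<inter> space \<mu> \<subseteq> Phi \<Gamma> \<eta> (\<psi> y)"
      using assms(4) by blast
  qed
  then show "Phi \<Gamma>' \<delta> y \<in> null_sets (distr \<mu> borel \<phi>)"
    using null_sets_distr_iff[OF assms(2)] assms(3) by blast
qed

lemma compact_uniform_modulus:
  fixes f :: "'a::metric_space \<Rightarrow> 'b::metric_space"
  assumes "compact (UNIV :: 'a set)" "continuous_on UNIV f" "\<epsilon> > 0"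
  obtains \<delta> where "\<delta> > 0" "\<And>a b. dist a b \<le> \<delta> \<Longrightarrow> dist (f a) (f b) \<le> \<epsilon>"
proof -
  obtain d where "d > 0" and d: "\<And>a b. dist a b < d \<Longrightarrow> dist (f a) (f b) < \<epsilon>"
    using compact_uniformly_continuous[OF assms(2,1)] assms(3)
    unfolding uniformly_continuous_on_def by (metis UNIV_I dist_commute)
  show ?thesis
    by (rule that[of "d / 2"]) (use \<open>d > 0\<close> d in \<open>auto intro: less_imp_le\<close>)
qed

theorem mainTheorem13:
  fixes G :: "('a::metric_space) pmap set" and H :: "('b::metric_space) pmap set"
    and \<phi> :: "'a \<Rightarrow> 'b" and G1 :: "'a pmap set" and \<mu> :: "'a measure" and \<eta> :: real
  assumes "compact (UNIV :: 'a set)" and "compact (UNIV :: 'b set)"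
    and "fin_gen_pseudogroup G" and "fin_gen_pseudogroup H"
    and "strongly_isomorphic G H \<phi>"
    and "finite G1" and "generates G1 G"
    and "prob_space \<mu>" and "sets \<mu> = sets borel"
    and "\<eta> > 0" and "expansive_measure \<mu> G1 \<eta>"
  shows "\<exists>\<delta>>0. expansive_measure (distr \<mu> borel \<phi>)
                 (conj_pmap \<phi> (inv \<phi>) ` G1) \<delta>"
proof -
  have hom: "homeomorphism UNIV UNIV \<phi> (inv \<phi>)"
    using assms(5) by (simp add: strongly_isomorphic_def)
  then have inv1: "\<And>x. inv \<phi> (\<phi> x) = x" and inv2: "\<And>y. \<phi> (inv \<phi> y) = y"
    by (auto simp: homeomorphism_def)
  obtain \<delta> where "\<delta> > 0" and modulus: "\<And>a b. dist a b \<le> \<delta> \<Longrightarrow> dist (inv \<phi> a) (inv \<phi> b) \<le> \<eta>"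
    using compact_uniform_modulus[OF assms(2) _ assms(10)] hom by (auto simp: homeomorphism_def)
  have "conj_pmap \<phi> (inv \<phi>) g \<in> Homeo" if "g \<in> G1" for g
  proof -
    have "G1 \<subseteq> Homeo" "G = generated_pg G1" using assms(7) by (auto simp: generates_def)
    with that have "conj_pmap \<phi> (inv \<phi>) g \<in> H"
      using assms(5) generator_in_generated_pg by (auto simp: strongly_isomorphic_def)
    then show ?thesis
      using assms(4) by (auto simp: fin_gen_pseudogroup_def is_pseudogroup_def)
  qed
  then have closed_sets: "Phi (conj_pmap \<phi> (inv \<phi>) ` G1) \<delta> y \<in> sets borel" for y
    by (auto intro!: borel_closed closed_Phi Homeo_imp_continuous_pmap)
  have measurable: "\<phi> \<in> measurable \<mu> borel"
    using measurable_cong_sets[OF assms(9) refl] borel_measurable_continuous_onI hom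
    by (auto simp: homeomorphism_def)
  have "expansive_measure (distr \<mu> borel \<phi>) (conj_pmap \<phi> (inv \<phi>) ` G1) \<delta>"
    using expansive_measure_distr[OF assms(11) measurable closed_sets
        vimage_Phi_conj_pmap_subset[OF inv1 inv2 modulus]] .
  with \<open>\<delta> > 0\<close> show ?thesis by blast
qed

end
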